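(* Suppose $D$ is the class of transvections in the unitary group $\mathrm{SU}_{n+1}(2)$, $n\ge2$. Then $\mathcal{A}(D)/\mathcal{V}(D)$ is isomorphic to the Lie algebra of type ${}^2A_n(2)$ modulo its center.
   Context: For a class $D$ of $3$-transpositions generating a group (involutions with $o(de)\in\{1,2,3\}$): lines are triples $\{d,e,d^e\}$ with $d,e$ non-commuting; $\mathcal{A}(D)$ is the $\mathbb{F}_2$-space with basis $D$ and bilinear product $d*e=d+e+f$ if $\{d,e,f\}$ is a line, $0$ otherwise; the form $\langle d,e\rangle$ is $1$ if $d,e$ do not commute and $0$ otherwise; $\mathcal{V}(D)$ is its radical. The Lie algebra of type ${}^2A_n(2)$ is the $\mathbb{F}_2$-Lie algebra $\mathfrak g_2$ generated, inside the split simple Lie algebra $\mathfrak g$ of type $A_n$ over $\mathbb{F}_4$ with Chevalley basis $\{\mathfrak x_\alpha\}\cup\{[\mathfrak x_\alpha,\mathfrak x_{-\alpha}]\}$, by the elements $\omega\mathfrak x_\alpha+\bar\omega\mathfrak x_{-\alpha}+\omega\bar\omega[\mathfrak x_\alpha,\mathfrak x_{-\alpha}]$ ($\alpha$ a root, $\omega\in\mathbb{F}_4^*$, $\bar\omega=\omega^2$); equivalently the unitary Lie algebra $\mathfrak{su}_{n+1}(2)$. *)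

theory Defs
  imports "HOL-Library.Z2" "Jordan_Normal_Form.Determinant"
begin

text \<open>Elements 0, 1, w, w2 where w^2 = w + 1 (so w2 = w^2 = w + 1).\<close>

datatype gf4 = G0 | G1 | Gw | Gw2

instantiation gf4 :: field
begin

fun plus_gf4 :: "gf4 \<Rightarrow> gf4 \<Rightarrow> gf4" where
  "plus_gf4 G0 y = y"
| "plus_gf4 x G0 = x"
| "plus_gf4 G1 G1 = G0" | "plus_gf4 G1 Gw = Gw2" | "plus_gf4 G1 Gw2 = Gw"
| "plus_gf4 Gw G1 = Gw2" | "plus_gf4 Gw Gw = G0" | "plus_gf4 Gw Gw2 = G1"
| "plus_gf4 Gw2 G1 = Gw" | "plus_gf4 Gw2 Gw = G1" | "plus_gf4 Gw2 Gw2 = G0"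

fun times_gf4 :: "gf4 \<Rightarrow> gf4 \<Rightarrow> gf4" where
  "times_gf4 G0 y = G0"
| "times_gf4 x G0 = G0"
| "times_gf4 G1 y = y"
| "times_gf4 x G1 = x"
| "times_gf4 Gw Gw = Gw2" | "times_gf4 Gw Gw2 = G1"
| "times_gf4 Gw2 Gw = G1" | "times_gf4 Gw2 Gw2 = Gw"

fun inverse_gf4 :: "gf4 \<Rightarrow> gf4" where
  "inverse_gf4 G0 = G0" | "inverse_gf4 G1 = G1"
| "inverse_gf4 Gw = Gw2" | "inverse_gf4 Gw2 = Gw"

definition zero_gf4 :: gf4 where "zero_gf4 = G0"
definition one_gf4 :: gf4 where "one_gf4 = G1"
definition uminus_gf4 :: "gf4 \<Rightarrow> gf4" where "uminus_gf4 x = x"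
definition minus_gf4 :: "gf4 \<Rightarrow> gf4 \<Rightarrow> gf4" where "minus_gf4 x y = x + y"
definition divide_gf4 :: "gf4 \<Rightarrow> gf4 \<Rightarrow> gf4" where "divide_gf4 x y = x * inverse y"

instance
proof
  fix a b c :: gf4
  show "a + b + c = a + (b + c)" by (cases a; cases b; cases c) simp_all
  show "a + b = b + a" by (cases a; cases b) simp_all
  show "0 + a = a" by (simp add: zero_gf4_def)
  show "- a + a = 0" by (cases a) (simp_all add: uminus_gf4_def zero_gf4_def)
  show "a - b = a + - b" by (simp add: minus_gf4_def uminus_gf4_def)
  show "a * b * c = a * (b * c)" by (cases a; cases b; cases c) simp_all
  show "a * b = b * a" by (cases a; cases b) simp_all
  show "1 * a = a" by (cases a) (simp_all add: one_gf4_def)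
  show "(a + b) * c = a * c + b * c" by (cases a; cases b; cases c) simp_all
  show "(0::gf4) \<noteq> 1" by (simp add: zero_gf4_def one_gf4_def)
  show "a \<noteq> 0 \<Longrightarrow> inverse a * a = 1" by (cases a) (simp_all add: zero_gf4_def one_gf4_def)
  show "a div b = a * inverse b" by (simp add: divide_gf4_def)
  show "inverse (0::gf4) = 0" by (simp add: zero_gf4_def)
qed

end

definition gf4_conj :: "gf4 \<Rightarrow> gf4" where
  "gf4_conj x = x * x"

text \<open>Conjugate transpose, w.r.t. the standard non-degenerate hermitian form
  h(x,y) = sum_i x_i * conj(y_i) on F_4^(n+1).\<close>
definition adj_mat :: "gf4 mat \<Rightarrow> gf4 mat" where
  "adj_mat A = transpose_mat (map_mat gf4_conj A)"

definition SU :: "nat \<Rightarrow> gf4 mat set" where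
  "SU n = {A \<in> carrier_mat (n+1) (n+1). A * adj_mat A = 1\<^sub>m (n+1) \<and> det A = 1}"

definition outer_prod :: "gf4 vec \<Rightarrow> gf4 vec \<Rightarrow> gf4 mat" where
  "outer_prod v w = mat (dim_vec v) (dim_vec w) (\<lambda>(i,j). v $ i * w $ j)"

definition is_transvection :: "nat \<Rightarrow> gf4 mat \<Rightarrow> bool" where
  "is_transvection N A \<longleftrightarrow> (\<exists>v w. v \<in> carrier_vec N \<and> w \<in> carrier_vec N \<and>
      v \<noteq> 0\<^sub>v N \<and> w \<noteq> 0\<^sub>v N \<and> w \<bullet> v = 0 \<and> A = 1\<^sub>m N + outer_prod v w)"

definition transvD :: "nat \<Rightarrow> gf4 mat set" where
  "transvD n = {A \<in> SU n. is_transvection (n+1) A}"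

text \<open>Elements of A(D): F_2-valued functions on group elements supported in D
  (D is finite here), i.e. formal F_2-combinations of elements of D.\<close>
definition Aspace :: "'g set \<Rightarrow> ('g \<Rightarrow> bit) set" where
  "Aspace D = {x. \<forall>g. g \<notin> D \<longrightarrow> x g = 0}"

definition Aadd :: "('g \<Rightarrow> bit) \<Rightarrow> ('g \<Rightarrow> bit) \<Rightarrow> ('g \<Rightarrow> bit)" where
  "Aadd x y = (\<lambda>g. x g + y g)"

text \<open>Product of basis elements d, e: d + e + d^e if d, e do not commute
  (then {d, e, d^e} is a line, d^e = e d e as e is an involution), else 0.\<close>
definition Abasis_prod :: "'g::times \<Rightarrow> 'g \<Rightarrow> ('g \<Rightarrow> bit)" where
  "Abasis_prod d e = (if d * e \<noteq> e * d
      then (\<lambda>g. of_bool (g = d) + of_bool (g = e) + of_bool (g = e * d * e))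
      else (\<lambda>g. 0))"

definition Amult :: "'g::times set \<Rightarrow> ('g \<Rightarrow> bit) \<Rightarrow> ('g \<Rightarrow> bit) \<Rightarrow> ('g \<Rightarrow> bit)" where
  "Amult D x y = (\<lambda>g. \<Sum>d\<in>D. \<Sum>e\<in>D. x d * y e * Abasis_prod d e g)"

definition Aform :: "'g::times set \<Rightarrow> ('g \<Rightarrow> bit) \<Rightarrow> ('g \<Rightarrow> bit) \<Rightarrow> bit" where
  "Aform D x y = (\<Sum>d\<in>D. \<Sum>e\<in>D. x d * y e * of_bool (d * e \<noteq> e * d))"

definition Arad :: "'g::times set \<Rightarrow> ('g \<Rightarrow> bit) set" where
  "Arad D = {x \<in> Aspace D. \<forall>y \<in> Aspace D. Aform D x y = 0}"

definition lie_bracket :: "gf4 mat \<Rightarrow> gf4 mat \<Rightarrow> gf4 mat" where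
  "lie_bracket A B = A * B - B * A"

definition Emat :: "nat \<Rightarrow> nat \<Rightarrow> nat \<Rightarrow> gf4 mat" where
  "Emat N i j = mat N N (\<lambda>(k,l). if k = i \<and> l = j then 1 else 0)"

text \<open>Chevalley basis of the split Lie algebra of type A_n over F_4 realised in
  sl_{n+1}(F_4): x_alpha = E_ij (alpha = e_i - e_j, i \<noteq> j), x_{-alpha} = E_ji,
  [x_alpha, x_{-alpha}] = E_ii - E_jj.\<close>
definition g2_gens :: "nat \<Rightarrow> gf4 mat set" where
  "g2_gens n = {w \<cdot>\<^sub>m Emat (n+1) i j + gf4_conj w \<cdot>\<^sub>m Emat (n+1) j i
        + (w * gf4_conj w) \<cdot>\<^sub>m (Emat (n+1) i i - Emat (n+1) j j)
     | i j w. i < n+1 \<and> j < n+1 \<and> i \<noteq> j \<and> w \<noteq> 0}"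

text \<open>The F_2-Lie algebra generated by these elements (F_2-span = closure under +).\<close>
inductive_set g2 :: "nat \<Rightarrow> gf4 mat set" for n where
  gen: "x \<in> g2_gens n \<Longrightarrow> x \<in> g2 n"
| add: "x \<in> g2 n \<Longrightarrow> y \<in> g2 n \<Longrightarrow> x + y \<in> g2 n"
| brk: "x \<in> g2 n \<Longrightarrow> y \<in> g2 n \<Longrightarrow> lie_bracket x y \<in> g2 n"

definition lie_center :: "nat \<Rightarrow> gf4 mat set \<Rightarrow> gf4 mat set" where
  "lie_center N L = {z \<in> L. \<forall>y \<in> L. lie_bracket z y = 0\<^sub>m N N}"

text \<open>A/I \<cong> B/J as (non-associative) F_2-algebras, witnessed by an additive
  (= F_2-linear) map phi : A \<rightarrow> B inducing a bijective algebra map A/I \<rightarrow> B/J.\<close>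
definition alg_quot_iso ::
  "'a set \<Rightarrow> ('a \<Rightarrow> 'a \<Rightarrow> 'a) \<Rightarrow> ('a \<Rightarrow> 'a \<Rightarrow> 'a) \<Rightarrow> 'a set \<Rightarrow>
   'b set \<Rightarrow> ('b \<Rightarrow> 'b \<Rightarrow> 'b) \<Rightarrow> ('b \<Rightarrow> 'b \<Rightarrow> 'b) \<Rightarrow> 'b set \<Rightarrow> bool" where
  "alg_quot_iso A addA mulA I B addB mulB J \<longleftrightarrow>
    (\<exists>\<phi>. (\<forall>x \<in> A. \<phi> x \<in> B)
      \<and> (\<forall>x \<in> A. \<forall>y \<in> A. \<phi> (addA x y) = addB (\<phi> x) (\<phi> y))
      \<and> (\<forall>x \<in> A. \<forall>y \<in> A. \<exists>z \<in> J. \<phi> (mulA x y) = addB (mulB (\<phi> x) (\<phi> y)) z)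
      \<and> (\<forall>b \<in> B. \<exists>x \<in> A. \<exists>z \<in> J. b = addB (\<phi> x) z)
      \<and> (\<forall>x \<in> A. \<phi> x \<in> J \<longleftrightarrow> x \<in> I))"

end

theory Submission
  imports Defs
begin

text \<open>
  A transvection \<open>d\<close> of \<open>SU\<^sub>n\<^sub>+\<^sub>1(2)\<close> is an involution, hence hermitian, and \<open>d = 1 + M\<close> with
  \<open>M = v w\<^sup>T\<close> of rank one and \<open>M\<^sup>2 = 0\<close>; so \<open>M\<close> lies in the Lie algebra \<open>su\<^sub>n\<^sub>+\<^sub>1(2)\<close> of traceless
  hermitian matrices, which is the algebra of type \<open>\<^sup>2A\<^sub>n(2)\<close> (its defining generators are such \<open>M\<close>).
  For transvections \<open>d, e\<close> with parts \<open>M, K\<close> the trace \<open>tr(MK)\<close> lies in \<open>F\<^sub>2\<close> and equals \<open>1\<close> exactly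
  when \<open>d, e\<close> do not commute; then \<open>MKM = M\<close>, \<open>KMK = K\<close>, and the part of \<open>d\<^sup>e = ede\<close> is
  \<open>M + K + MK + KM\<close>. Hence the \<open>F\<^sub>2\<close>-linear map \<open>x \<mapsto> \<Sum> x\<^sub>d M\<^sub>d\<close> turns the product of \<open>\<A>(D)\<close> into the
  commutator and its form into the trace form \<open>tr(XY)\<close>. The map is onto, and for \<open>n \<ge> 2\<close> both the
  centre of \<open>su\<^sub>n\<^sub>+\<^sub>1(2)\<close> and the radical of its trace form consist of the scalar matrices, so the
  preimage of the centre is exactly \<open>\<V>(D)\<close>.
\<close>

lemma gf4_UNIV: "(UNIV :: gf4 set) = {G0, G1, Gw, Gw2}"
  by (auto intro: gf4.exhaust)

instance gf4 :: finite
  by standard (simp add: gf4_UNIV)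

lemma gf4_add_self [simp]: "(a::gf4) + a = 0"
  by (cases a) (simp_all add: zero_gf4_def)

lemma gf4_add_self_left [simp]: "(a::gf4) + (a + b) = b"
  by (metis add.assoc gf4_add_self add_0)

lemma gf4_two [simp]: "(2::gf4) = 0"
  by (metis one_add_one gf4_add_self)

lemma gf4_uminus [simp]: "- (a::gf4) = a"
  by (simp add: uminus_gf4_def)

lemma gf4_minus: "(a::gf4) - b = a + b"
  by (simp add: minus_gf4_def)

lemma gf4_add_eq_0_iff: "(a::gf4) + b = 0 \<longleftrightarrow> a = b"
  by (cases a; cases b) (simp_all add: zero_gf4_def)

lemma gf4_nonzero [simp]: "Gw \<noteq> 0" "Gw2 \<noteq> 0"
  by (simp_all add: zero_gf4_def)

lemma gf4_mult_Gw_nonzero: "c \<noteq> 0 \<Longrightarrow> c * Gw \<noteq> (0::gf4)" "c \<noteq> 0 \<Longrightarrow> c * Gw2 \<noteq> (0::gf4)"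
  by (cases c; simp add: zero_gf4_def)+

lemma gf4_mult_Gw_add_Gw2: "c * Gw + c * Gw2 = (c::gf4)"
  by (cases c) (simp_all add: zero_gf4_def)

lemma gf4_square_eq_1: "(a::gf4) * a = 1 \<Longrightarrow> a = 1"
  by (cases a) (simp_all add: zero_gf4_def one_gf4_def)

lemma gf4_conj_add [simp]: "gf4_conj (a + b) = gf4_conj a + gf4_conj b"
  by (cases a; cases b) (simp_all add: gf4_conj_def)

lemma gf4_conj_mult [simp]: "gf4_conj (a * b) = gf4_conj a * gf4_conj b"
  by (cases a; cases b) (simp_all add: gf4_conj_def)

lemma gf4_conj_conj [simp]: "gf4_conj (gf4_conj a) = a"
  by (cases a) (simp_all add: gf4_conj_def)

lemma gf4_conj_0 [simp]: "gf4_conj 0 = 0"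
  by (simp add: gf4_conj_def)

lemma gf4_conj_1 [simp]: "gf4_conj 1 = 1"
  by (simp add: gf4_conj_def)

lemma gf4_conj_sum: "gf4_conj (sum f A) = (\<Sum>x\<in>A. gf4_conj (f x))"
  by (induction A rule: infinite_finite_induct) auto

lemma gf4_mult_conj_self: "a \<noteq> 0 \<Longrightarrow> a * gf4_conj a = 1"
  by (cases a) (simp_all add: gf4_conj_def zero_gf4_def one_gf4_def)

lemma gf4_conj_fixed: "gf4_conj a = a \<Longrightarrow> a = 0 \<or> a = 1"
  by (cases a) (simp_all add: gf4_conj_def zero_gf4_def one_gf4_def)

text \<open>The trace form of \<open>F\<^sub>4 / F\<^sub>2\<close> is nondegenerate: \<open>1, \<omega>\<close> test every element.\<close>
lemma gf4_trace_nondegenerate: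
  "a + gf4_conj a = 0 \<Longrightarrow> Gw * a + gf4_conj (Gw * a) = 0 \<Longrightarrow> a = 0"
  by (cases a) (simp_all add: gf4_conj_def zero_gf4_def one_gf4_def)

lemma finite_carrier_mat: "finite (carrier_mat N M :: 'a::finite mat set)"
proof -
  let ?S = "{..<N} \<times> {..<M}"
  let ?f = "\<lambda>A::'a mat. \<lambda>p. if p \<in> ?S then A $$ p else undefined"
  have inj: "inj_on ?f (carrier_mat N M)"
  proof
    fix A B assume A: "A \<in> carrier_mat N M" and B: "B \<in> carrier_mat N M" and eq: "?f A = ?f B"
    show "A = B"
    proof (rule eq_matI)
      fix i j assume "i < dim_row B" "j < dim_col B"
      then show "A $$ (i,j) = B $$ (i,j)" using fun_cong[OF eq, of "(i,j)"] B by auto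
    qed (use A B in auto)
  qed
  have sub: "?f ` carrier_mat N M \<subseteq> {f. \<forall>p. p \<notin> ?S \<longrightarrow> f p = undefined}" by auto
  have "finite {f::nat \<times> nat \<Rightarrow> 'a. \<forall>p. p \<notin> ?S \<longrightarrow> f p = undefined}"
    using finite_set_of_finite_funs[of ?S "UNIV::'a set" undefined] by simp
  then show ?thesis using finite_imageD[OF finite_subset[OF sub] inj] by blast
qed

lemma mult_mat_entry:
  "A \<in> carrier_mat N N \<Longrightarrow> B \<in> carrier_mat N N \<Longrightarrow> i < N \<Longrightarrow> j < N \<Longrightarrow>
   (A * B) $$ (i,j) = (\<Sum>k<N. A $$ (i,k) * B $$ (k,j))"
  by (simp add: index_mult_mat scalar_prod_def atLeast0LessThan)

lemma add_mat_self: "M \<in> carrier_mat N K \<Longrightarrow> M + M = 0\<^sub>m N K" for M :: "gf4 mat"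
  by (rule eq_matI) auto

lemma add_mat_cancel_right: "X \<in> carrier_mat N N \<Longrightarrow> Y \<in> carrier_mat N N \<Longrightarrow> X + Y + Y = (X::gf4 mat)"
  by (rule eq_matI) (auto simp: add.assoc)

lemma one_plus_mult_one_plus:
  assumes "M \<in> carrier_mat N N" "K \<in> carrier_mat N N"
  shows "(1\<^sub>m N + M) * (1\<^sub>m N + K) = 1\<^sub>m N + M + K + M * (K :: gf4 mat)"
proof -
  have "(1\<^sub>m N + M) * (1\<^sub>m N + K) = 1\<^sub>m N * (1\<^sub>m N + K) + M * (1\<^sub>m N + K)"
    using assms by (intro add_mult_distrib_mat) auto
  also have "\<dots> = (1\<^sub>m N + K) + (M * 1\<^sub>m N + M * K)"
    using assms by (subst mult_add_distrib_mat[of _ N N]) auto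
  also have "\<dots> = 1\<^sub>m N + M + K + M * K"
    using assms by (intro eq_matI) (auto simp: ac_simps)
  finally show ?thesis .
qed

lemma smult_smult_mat: "(a::'a::semigroup_mult) \<cdot>\<^sub>m (b \<cdot>\<^sub>m A) = (a * b) \<cdot>\<^sub>m A"
  by (rule eq_matI) (auto simp: mult.assoc)

lemma one_smult_mat [simp]: "(1::'a::monoid_mult) \<cdot>\<^sub>m A = A"
  by (rule eq_matI) auto

lemma lie_bracket_eq_0_iff:
  assumes "X \<in> carrier_mat N N" "Y \<in> carrier_mat N N"
  shows "lie_bracket X Y = 0\<^sub>m N N \<longleftrightarrow> X * Y = Y * X"
proof
  assume z: "lie_bracket X Y = 0\<^sub>m N N"
  show "X * Y = Y * X"
  proof (rule eq_matI)
    fix i j assume "i < dim_row (Y * X)" "j < dim_col (Y * X)"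
    then have ij: "i < N" "j < N" using assms by auto
    have "lie_bracket X Y $$ (i,j) = 0" using z ij by simp
    then show "(X * Y) $$ (i,j) = (Y * X) $$ (i,j)"
      using ij assms by (simp add: lie_bracket_def gf4_minus gf4_add_eq_0_iff)
  qed (use assms in auto)
next
  assume "X * Y = Y * X"
  then show "lie_bracket X Y = 0\<^sub>m N N"
    unfolding lie_bracket_def by (intro eq_matI) (use assms in auto)
qed

definition mat_trace :: "nat \<Rightarrow> gf4 mat \<Rightarrow> gf4" where
  "mat_trace N X = (\<Sum>i<N. X $$ (i,i))"

lemma mat_trace_mult_comm:
  "A \<in> carrier_mat N N \<Longrightarrow> B \<in> carrier_mat N N \<Longrightarrow> mat_trace N (A * B) = mat_trace N (B * A)"
proof -
  assume c: "A \<in> carrier_mat N N" "B \<in> carrier_mat N N"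
  have "mat_trace N (A * B) = (\<Sum>i<N. \<Sum>k<N. A $$ (i,k) * B $$ (k,i))"
    unfolding mat_trace_def by (intro sum.cong refl) (simp add: mult_mat_entry[OF c])
  also have "\<dots> = (\<Sum>k<N. \<Sum>i<N. B $$ (k,i) * A $$ (i,k))"
    by (subst sum.swap) (simp add: mult.commute)
  also have "\<dots> = mat_trace N (B * A)"
    unfolding mat_trace_def by (intro sum.cong refl) (simp add: mult_mat_entry[OF c(2,1)])
  finally show ?thesis .
qed

section \<open>The traceless hermitian matrices \<open>su\<^sub>N(2)\<close>\<close>

definition su :: "nat \<Rightarrow> gf4 mat set" where
  "su N = {X \<in> carrier_mat N N. (\<forall>i<N. \<forall>j<N. X $$ (j,i) = gf4_conj (X $$ (i,j)))
        \<and> mat_trace N X = 0}"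

lemma suI:
  "X \<in> carrier_mat N N \<Longrightarrow> (\<And>i j. i < N \<Longrightarrow> j < N \<Longrightarrow> X $$ (j,i) = gf4_conj (X $$ (i,j)))
   \<Longrightarrow> mat_trace N X = 0 \<Longrightarrow> X \<in> su N"
  unfolding su_def by blast

lemma suD:
  assumes "X \<in> su N"
  shows "X \<in> carrier_mat N N" "\<And>i j. i < N \<Longrightarrow> j < N \<Longrightarrow> X $$ (j,i) = gf4_conj (X $$ (i,j))"
    "mat_trace N X = 0"
  using assms unfolding su_def by blast+

lemma su_conj: "X \<in> su N \<Longrightarrow> i < N \<Longrightarrow> j < N \<Longrightarrow> gf4_conj (X $$ (i,j)) = X $$ (j,i)"
  using suD(2) by metis

lemma su_add: assumes "X \<in> su N" "Y \<in> su N" shows "X + Y \<in> su N"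
proof (rule suI)
  note XY = suD(1)[OF assms(1)] suD(1)[OF assms(2)]
  show "X + Y \<in> carrier_mat N N" using XY by simp
  show "(X + Y) $$ (j,i) = gf4_conj ((X + Y) $$ (i,j))" if "i < N" "j < N" for i j
    using that XY su_conj[OF assms(1)] su_conj[OF assms(2)] by auto
  have "mat_trace N (X + Y) = mat_trace N X + mat_trace N Y"
    using XY by (simp add: mat_trace_def sum.distrib)
  then show "mat_trace N (X + Y) = 0" using suD(3)[OF assms(1)] suD(3)[OF assms(2)] by simp
qed

lemma su_zero: "0\<^sub>m N N \<in> su N"
  by (rule suI) (auto simp: mat_trace_def)

lemma su_mult_swap:
  assumes "M \<in> su N" "K \<in> su N" "i < N" "j < N"
  shows "(K * M) $$ (i,j) = gf4_conj ((M * K) $$ (j,i))"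
proof -
  have c: "M \<in> carrier_mat N N" "K \<in> carrier_mat N N" using suD(1) assms by auto
  have "gf4_conj ((M * K) $$ (j,i)) = (\<Sum>k<N. gf4_conj (M $$ (j,k)) * gf4_conj (K $$ (k,i)))"
    by (simp add: mult_mat_entry[OF c assms(4,3)] gf4_conj_sum)
  also have "\<dots> = (\<Sum>k<N. K $$ (i,k) * M $$ (k,j))"
    using assms by (intro sum.cong) (auto simp: su_conj mult.commute)
  also have "\<dots> = (K * M) $$ (i,j)" by (simp add: mult_mat_entry[OF c(2,1) assms(3,4)])
  finally show ?thesis by simp
qed

lemma su_bracket: assumes "X \<in> su N" "Y \<in> su N" shows "lie_bracket X Y \<in> su N"
proof (rule suI)
  have c: "X \<in> carrier_mat N N" "Y \<in> carrier_mat N N" using suD(1) assms by auto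
  then have entry: "lie_bracket X Y $$ (i,j) = (X * Y) $$ (i,j) + (Y * X) $$ (i,j)"
    if "i < N" "j < N" for i j
    using that by (simp add: lie_bracket_def gf4_minus)
  show "lie_bracket X Y \<in> carrier_mat N N"
    using c unfolding lie_bracket_def by (simp add: minus_carrier_mat)
  show "lie_bracket X Y $$ (j,i) = gf4_conj (lie_bracket X Y $$ (i,j))" if "i < N" "j < N" for i j
    using that by (simp add: entry su_mult_swap[OF assms(1,2)] add.commute)
  have "mat_trace N (lie_bracket X Y) = mat_trace N (X * Y) + mat_trace N (Y * X)"
    by (simp add: mat_trace_def entry sum.distrib)
  then show "mat_trace N (lie_bracket X Y) = 0" using mat_trace_mult_comm[OF c] by simp
qed

definition su_gen :: "nat \<Rightarrow> nat \<Rightarrow> nat \<Rightarrow> gf4 \<Rightarrow> gf4 mat" where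
  "su_gen N i j w = w \<cdot>\<^sub>m Emat N i j + gf4_conj w \<cdot>\<^sub>m Emat N j i
        + (w * gf4_conj w) \<cdot>\<^sub>m (Emat N i i - Emat N j j)"

lemma g2_gens_eq: "g2_gens n = {su_gen (n+1) i j w | i j w. i < n+1 \<and> j < n+1 \<and> i \<noteq> j \<and> w \<noteq> 0}"
  by (simp add: g2_gens_def su_gen_def)

lemma su_gen_carrier [simp]: "su_gen N i j w \<in> carrier_mat N N"
  unfolding su_gen_def Emat_def by (intro add_carrier_mat smult_carrier_mat minus_carrier_mat mat_carrier)

lemma su_gen_dim [simp]: "dim_row (su_gen N i j w) = N" "dim_col (su_gen N i j w) = N"
  by (metis carrier_matD su_gen_carrier)+

lemma su_gen_entry:
  assumes "i \<noteq> j" "w \<noteq> 0" "k < N" "l < N"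
  shows "su_gen N i j w $$ (k,l) = (if k = i \<and> l = j then w else if k = j \<and> l = i then gf4_conj w
            else if k = l \<and> (k = i \<or> k = j) then 1 else 0)"
  using assms gf4_mult_conj_self[OF assms(2)] by (auto simp: su_gen_def Emat_def gf4_minus)

lemma su_gen_in_su: assumes "i \<noteq> j" "w \<noteq> 0" "i < N" "j < N" shows "su_gen N i j w \<in> su N"
proof (rule suI)
  show "su_gen N i j w $$ (l,k) = gf4_conj (su_gen N i j w $$ (k,l))" if "k < N" "l < N" for k l
    using that assms by (auto simp: su_gen_entry)
  have "mat_trace N (su_gen N i j w) = (\<Sum>k\<in>{i,j}. 1)"
    unfolding mat_trace_def using assms by (intro sum.mono_neutral_cong_right) (auto simp: su_gen_entry)
  then show "mat_trace N (su_gen N i j w) = 0" using assms(1) by simp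
qed simp

lemma g2_subset_su: "g2 n \<subseteq> su (n+1)"
proof
  show "x \<in> su (n+1)" if "x \<in> g2 n" for x
    using that by induction (auto simp: g2_gens_eq su_gen_in_su su_add su_bracket)
qed

definition herm_offdiag :: "nat \<Rightarrow> nat \<Rightarrow> nat \<Rightarrow> gf4 \<Rightarrow> gf4 mat" where
  "herm_offdiag N i j c = mat N N (\<lambda>(k,l). if k = i \<and> l = j then c else if k = j \<and> l = i then gf4_conj c else 0)"

definition diag_pair :: "nat \<Rightarrow> nat \<Rightarrow> nat \<Rightarrow> gf4 mat" where
  "diag_pair N i j = mat N N (\<lambda>(k,l). if k = l \<and> (k = i \<or> k = j) then 1 else 0)"

lemma herm_offdiag_eq_su_gen_add:
  assumes "i \<noteq> j" "c \<noteq> 0"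
  shows "herm_offdiag N i j c = su_gen N i j (c * Gw) + su_gen N i j (c * Gw2)"
proof -
  have conj_split: "gf4_conj c * gf4_conj Gw + gf4_conj c * gf4_conj Gw2 = gf4_conj c"
    using gf4_mult_Gw_add_Gw2[of c] gf4_conj_add gf4_conj_mult by metis
  show ?thesis
    by (rule eq_matI) (use assms gf4_mult_Gw_nonzero[OF assms(2)] conj_split in
        \<open>auto simp: herm_offdiag_def su_gen_entry gf4_mult_Gw_add_Gw2\<close>)
qed

lemma diag_pair_eq_su_gen_add: "i \<noteq> j \<Longrightarrow> diag_pair N i j = su_gen N i j 1 + herm_offdiag N i j 1"
  by (rule eq_matI) (auto simp: herm_offdiag_def diag_pair_def su_gen_entry)

lemma herm_offdiag_in_su: "i < N \<Longrightarrow> j < N \<Longrightarrow> i \<noteq> j \<Longrightarrow> c \<noteq> 0 \<Longrightarrow> herm_offdiag N i j c \<in> su N"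
  by (simp add: herm_offdiag_eq_su_gen_add su_add su_gen_in_su gf4_mult_Gw_nonzero)

lemma diag_pair_in_su: "i < N \<Longrightarrow> j < N \<Longrightarrow> i \<noteq> j \<Longrightarrow> diag_pair N i j \<in> su N"
  by (simp add: diag_pair_eq_su_gen_add su_add su_gen_in_su herm_offdiag_in_su)

definition mat_support :: "nat \<Rightarrow> gf4 mat \<Rightarrow> (nat \<times> nat) set" where
  "mat_support N Z = {p \<in> {..<N} \<times> {..<N}. Z $$ p \<noteq> 0}"

lemma mat_support_add_herm_offdiag:
  assumes Z: "Z \<in> su N" and ij: "i < N" "j < N" "i \<noteq> j" "Z $$ (i,j) \<noteq> 0"
  shows "mat_support N (Z + herm_offdiag N i j (Z $$ (i,j))) \<subset> mat_support N Z"
proof -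
  have "(Z + herm_offdiag N i j (Z $$ (i,j))) $$ (a,b) = (if (a,b) \<in> {(i,j), (j,i)} then 0 else Z $$ (a,b))"
    if "a < N" "b < N" for a b
    using that ij suD(1)[OF Z] su_conj[OF Z ij(1,2)] by (auto simp: herm_offdiag_def)
  then have "mat_support N (Z + herm_offdiag N i j (Z $$ (i,j))) = mat_support N Z - {(i,j), (j,i)}"
    unfolding mat_support_def by (auto split: if_splits)
  moreover have "(i,j) \<in> mat_support N Z" using ij by (simp add: mat_support_def)
  ultimately show ?thesis by blast
qed

lemma mat_support_add_diag_pair:
  assumes Z: "Z \<in> carrier_mat N N" and ij: "i < N" "j < N" "Z $$ (i,i) = 1" "Z $$ (j,j) = 1"
  shows "mat_support N (Z + diag_pair N i j) \<subset> mat_support N Z"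
proof -
  have "(Z + diag_pair N i j) $$ (a,b) = (if (a,b) \<in> {(i,i), (j,j)} then 0 else Z $$ (a,b))"
    if "a < N" "b < N" for a b
    using that Z ij by (auto simp: diag_pair_def)
  then have "mat_support N (Z + diag_pair N i j) = mat_support N Z - {(i,i), (j,j)}"
    unfolding mat_support_def by (auto split: if_splits)
  moreover have "(i,i) \<in> mat_support N Z" using ij by (simp add: mat_support_def)
  ultimately show ?thesis by blast
qed

text \<open>Diagonal entries of a hermitian matrix lie in \<open>F\<^sub>2\<close>, so a zero trace forces them to pair up.\<close>
lemma su_diagonal_pair:
  assumes Z: "Z \<in> su N" and i: "i < N" "Z $$ (i,i) \<noteq> 0"
  shows "Z $$ (i,i) = 1" "\<exists>j<N. j \<noteq> i \<and> Z $$ (j,j) = 1"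
proof -
  have one: "Z $$ (k,k) = 1" if "k < N" "Z $$ (k,k) \<noteq> 0" for k
    using gf4_conj_fixed[OF su_conj[OF Z that(1) that(1)]] that(2) by auto
  then show "Z $$ (i,i) = 1" using i by blast
  show "\<exists>j<N. j \<noteq> i \<and> Z $$ (j,j) = 1"
  proof (rule ccontr)
    assume "\<not> ?thesis"
    then have "mat_trace N Z = (\<Sum>k<N. if k = i then 1 else 0)"
      unfolding mat_trace_def using one[OF i] one by (intro sum.cong) auto
    then show False using suD(3)[OF Z] i by simp
  qed
qed

lemma su_reduce_support:
  assumes Z: "Z \<in> su N" "Z \<noteq> 0\<^sub>m N N"
  obtains Y i j c where "Y \<in> su N" "mat_support N (Z + Y) \<subset> mat_support N Z"
    "Y = diag_pair N i j \<or> Y = herm_offdiag N i j c" "i < N" "j < N" "i \<noteq> j" "c \<noteq> 0"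
proof (cases "\<exists>i j. i < N \<and> j < N \<and> i \<noteq> j \<and> Z $$ (i,j) \<noteq> 0")
  case True
  then obtain i j where ij: "i < N" "j < N" "i \<noteq> j" "Z $$ (i,j) \<noteq> 0" by blast
  show ?thesis
    by (rule that[OF herm_offdiag_in_su[OF ij] mat_support_add_herm_offdiag[OF Z(1) ij] _ ij(1-3,4)]) simp
next
  case False
  have "\<exists>i<N. Z $$ (i,i) \<noteq> 0"
  proof (rule ccontr)
    assume diag: "\<not> ?thesis"
    have "Z = 0\<^sub>m N N"
    proof (rule eq_matI)
      fix k l assume "k < dim_row (0\<^sub>m N N :: gf4 mat)" "l < dim_col (0\<^sub>m N N :: gf4 mat)"
      then show "Z $$ (k,l) = 0\<^sub>m N N $$ (k,l)" using False diag by (cases "k = l") auto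
    qed (use suD(1)[OF Z(1)] in auto)
    then show False using Z(2) by simp
  qed
  then obtain i where i: "i < N" "Z $$ (i,i) \<noteq> 0" by blast
  obtain j where j: "j < N" "j \<noteq> i" "Z $$ (j,j) = 1" using su_diagonal_pair(2)[OF Z(1) i] by blast
  have "mat_support N (Z + diag_pair N i j) \<subset> mat_support N Z"
    using mat_support_add_diag_pair[OF suD(1)[OF Z(1)] i(1) j(1) su_diagonal_pair(1)[OF Z(1) i] j(3)] .
  then show ?thesis
    using that[OF diag_pair_in_su[OF i(1) j(1)] _ _ i(1) j(1), of 1] j(2) by simp
qed

text \<open>The matrices \<open>su_gen\<close> span \<open>su N\<close> additively: subtracting an off-diagonal pair or a pair of
  diagonal ones strictly shrinks the support.\<close>
lemma su_induct [consumes 2, case_names add gen]: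
  assumes X: "X \<in> su N" and N: "2 \<le> N"
    and add: "\<And>X Y. X \<in> su N \<Longrightarrow> Y \<in> su N \<Longrightarrow> P X \<Longrightarrow> P Y \<Longrightarrow> P (X + Y)"
    and gen: "\<And>i j w. i < N \<Longrightarrow> j < N \<Longrightarrow> i \<noteq> j \<Longrightarrow> w \<noteq> 0 \<Longrightarrow> P (su_gen N i j w)"
  shows "P X"
proof -
  have P_offdiag: "P (herm_offdiag N i j c)" if "i < N" "j < N" "i \<noteq> j" "c \<noteq> 0" for i j c
    using that by (simp add: herm_offdiag_eq_su_gen_add add gen su_gen_in_su gf4_mult_Gw_nonzero)
  have P_diag: "P (diag_pair N i j)" if "i < N" "j < N" "i \<noteq> j" for i j
    using that by (simp add: diag_pair_eq_su_gen_add add gen su_gen_in_su herm_offdiag_in_su P_offdiag)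
  have P_zero: "P (0\<^sub>m N N)"
  proof -
    have "su_gen N 0 1 1 \<in> su N" "P (su_gen N 0 1 1)" using N by (auto intro: su_gen_in_su gen)
    then have "P (su_gen N 0 1 1 + su_gen N 0 1 1)" using add by blast
    then show ?thesis by (simp add: add_mat_self[OF su_gen_carrier])
  qed
  show ?thesis
    using X
  proof (induction "card (mat_support N X)" arbitrary: X rule: less_induct)
    case less
    show ?case
    proof (cases "X = 0\<^sub>m N N")
      case False
      then obtain Y i j c where Y: "Y \<in> su N" "mat_support N (X + Y) \<subset> mat_support N X"
        "Y = diag_pair N i j \<or> Y = herm_offdiag N i j c" "i < N" "j < N" "i \<noteq> j" "c \<noteq> 0"
        using su_reduce_support[OF less.prems] by metis
      have "card (mat_support N (X + Y)) < card (mat_support N X)"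
        using Y(2) by (rule psubset_card_mono[rotated]) (simp add: mat_support_def)
      then have "P (X + Y)" using less.hyps su_add[OF less.prems Y(1)] by blast
      moreover have "P Y" using Y(3-7) P_diag P_offdiag by blast
      ultimately have "P (X + Y + Y)" using add su_add[OF less.prems Y(1)] Y(1) by blast
      then show ?thesis using add_mat_cancel_right[OF suD(1)[OF less.prems] suD(1)[OF Y(1)]] by simp
    qed (simp add: P_zero)
  qed
qed

lemma g2_eq_su: assumes "1 \<le> n" shows "g2 n = su (n+1)"
proof
  have N: "2 \<le> n+1" using assms by simp
  show "su (n+1) \<subseteq> g2 n"
  proof
    show "X \<in> g2 n" if "X \<in> su (n+1)" for X
      using that N
    proof (induction rule: su_induct)
      case (gen i j w) then show ?case by (intro g2.gen) (auto simp: g2_gens_eq)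
    qed (auto intro: g2.add)
  qed
qed (rule g2_subset_su)

section \<open>Transvections\<close>

lemma outer_prod_dim [simp]:
  "dim_row (outer_prod v w) = dim_vec v" "dim_col (outer_prod v w) = dim_vec w"
  by (simp_all add: outer_prod_def)

lemma outer_prod_carrier [simp]:
  "v \<in> carrier_vec N \<Longrightarrow> w \<in> carrier_vec N \<Longrightarrow> outer_prod v w \<in> carrier_mat N N"
  by (simp add: outer_prod_def)

lemma outer_prod_entry:
  "v \<in> carrier_vec N \<Longrightarrow> w \<in> carrier_vec N \<Longrightarrow> i < N \<Longrightarrow> j < N \<Longrightarrow>
   outer_prod v w $$ (i,j) = v $ i * w $ j"
  by (simp add: outer_prod_def)

lemma outer_prod_mult:
  assumes "v \<in> carrier_vec N" "w \<in> carrier_vec N" "a \<in> carrier_vec N" "b \<in> carrier_vec N"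
  shows "outer_prod v w * outer_prod a b = (w \<bullet> a) \<cdot>\<^sub>m outer_prod v b"
proof (rule eq_matI)
  fix i j assume "i < dim_row ((w \<bullet> a) \<cdot>\<^sub>m outer_prod v b)" "j < dim_col ((w \<bullet> a) \<cdot>\<^sub>m outer_prod v b)"
  then have ij: "i < N" "j < N" using assms by (auto simp: outer_prod_def)
  have "(outer_prod v w * outer_prod a b) $$ (i,j)
      = (\<Sum>k<N. outer_prod v w $$ (i,k) * outer_prod a b $$ (k,j))"
    by (rule mult_mat_entry) (use assms ij in auto)
  also have "\<dots> = (\<Sum>k<N. v $ i * w $ k * (a $ k * b $ j))"
    using assms ij by (simp add: outer_prod_entry)
  also have "\<dots> = (w \<bullet> a) * (v $ i * b $ j)"
    using assms by (auto simp: scalar_prod_def atLeast0LessThan sum_distrib_left ac_simps intro!: sum.cong)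
  finally show "(outer_prod v w * outer_prod a b) $$ (i,j) = ((w \<bullet> a) \<cdot>\<^sub>m outer_prod v b) $$ (i,j)"
    using assms ij by (simp add: outer_prod_def)
qed (use assms in auto)

lemma mat_trace_outer_prod:
  "v \<in> carrier_vec N \<Longrightarrow> w \<in> carrier_vec N \<Longrightarrow> mat_trace N (outer_prod v w) = w \<bullet> v"
  by (simp add: mat_trace_def outer_prod_entry scalar_prod_def atLeast0LessThan mult.commute)

lemma outer_prod_nonzero:
  assumes "v \<in> carrier_vec N" "w \<in> carrier_vec N" "v \<noteq> 0\<^sub>v N" "w \<noteq> 0\<^sub>v N"
  shows "outer_prod v w \<noteq> 0\<^sub>m N N"
proof -
  obtain i where i: "i < N" "v $ i \<noteq> 0" using assms(1,3) by (metis eq_vecI carrier_vecD index_zero_vec)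
  obtain j where j: "j < N" "w $ j \<noteq> 0" using assms(2,4) by (metis eq_vecI carrier_vecD index_zero_vec)
  have "outer_prod v w $$ (i,j) \<noteq> 0" using i j assms by (simp add: outer_prod_entry)
  then show ?thesis using i j by auto
qed

lemma mat_trace_smult: "X \<in> carrier_mat N N \<Longrightarrow> mat_trace N (c \<cdot>\<^sub>m X) = c * mat_trace N X"
  by (simp add: mat_trace_def sum_distrib_left)

lemma outer_prod_sandwich:
  assumes "v \<in> carrier_vec N" "w \<in> carrier_vec N" "a \<in> carrier_vec N" "b \<in> carrier_vec N"
  shows "outer_prod v w * outer_prod a b * outer_prod v w
      = mat_trace N (outer_prod v w * outer_prod a b) \<cdot>\<^sub>m outer_prod v w"
proof -
  have "outer_prod v w * outer_prod a b * outer_prod v w = (w \<bullet> a) \<cdot>\<^sub>m (outer_prod v b * outer_prod v w)"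
    using assms
    by (simp add: outer_prod_mult mult_smult_assoc_mat[OF outer_prod_carrier[OF assms(1,4)] outer_prod_carrier[OF assms(1,2)]])
  also have "\<dots> = ((w \<bullet> a) * (b \<bullet> v)) \<cdot>\<^sub>m outer_prod v w"
    using assms by (simp add: outer_prod_mult smult_smult_mat)
  also have "(w \<bullet> a) * (b \<bullet> v) = mat_trace N (outer_prod v w * outer_prod a b)"
    using assms by (simp add: outer_prod_mult mat_trace_smult mat_trace_outer_prod)
  finally show ?thesis .
qed

lemma outer_prod_mult_zero_if_trace_zero:
  assumes "v \<in> carrier_vec N" "w \<in> carrier_vec N" "a \<in> carrier_vec N" "b \<in> carrier_vec N"
    and "mat_trace N (outer_prod v w * outer_prod a b) = 0"
  shows "outer_prod v w * outer_prod a b = 0\<^sub>m N N \<or> outer_prod a b * outer_prod v w = 0\<^sub>m N N"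
proof -
  have "(w \<bullet> a) * (b \<bullet> v) = 0"
    using assms by (simp add: outer_prod_mult mat_trace_smult mat_trace_outer_prod)
  then have "w \<bullet> a = 0 \<or> b \<bullet> v = 0" by simp
  then show ?thesis
    using assms by (auto simp: outer_prod_mult intro!: eq_matI)
qed

lemma adj_mat_entry:
  "A \<in> carrier_mat N N \<Longrightarrow> i < N \<Longrightarrow> j < N \<Longrightarrow> adj_mat A $$ (i,j) = gf4_conj (A $$ (j,i))"
  by (simp add: adj_mat_def)

lemma adj_mat_carrier [simp]: "A \<in> carrier_mat N N \<Longrightarrow> adj_mat A \<in> carrier_mat N N"
  by (simp add: adj_mat_def)

text \<open>Over \<open>F\<^sub>4\<close> we have \<open>d + 1 = d - 1\<close>.\<close>
definition nil_part :: "nat \<Rightarrow> gf4 mat \<Rightarrow> gf4 mat" where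
  "nil_part N d = d + 1\<^sub>m N"

lemma transvD_elim:
  assumes "d \<in> transvD n"
  obtains v w where "v \<in> carrier_vec (n+1)" "w \<in> carrier_vec (n+1)" "v \<noteq> 0\<^sub>v (n+1)" "w \<noteq> 0\<^sub>v (n+1)"
    "w \<bullet> v = 0" "nil_part (n+1) d = outer_prod v w" "d = 1\<^sub>m (n+1) + outer_prod v w"
    "d \<in> carrier_mat (n+1) (n+1)" "d * adj_mat d = 1\<^sub>m (n+1)"
proof -
  from assms obtain v w where vw: "v \<in> carrier_vec (n+1)" "w \<in> carrier_vec (n+1)"
    "v \<noteq> 0\<^sub>v (n+1)" "w \<noteq> 0\<^sub>v (n+1)" "w \<bullet> v = 0" "d = 1\<^sub>m (n+1) + outer_prod v w"
    unfolding transvD_def is_transvection_def by blast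
  have "d \<in> SU n" using assms by (simp add: transvD_def)
  then have "d * adj_mat d = 1\<^sub>m (n+1)" "d \<in> carrier_mat (n+1) (n+1)" by (auto simp: SU_def)
  moreover have "nil_part (n+1) d = outer_prod v w"
    unfolding nil_part_def vw(6) by (rule eq_matI) (use vw in \<open>auto simp: ac_simps\<close>)
  ultimately show ?thesis using that vw by blast
qed

lemma transvD_carrier: "d \<in> transvD n \<Longrightarrow> d \<in> carrier_mat (n+1) (n+1)"
  by (erule transvD_elim) simp

lemma transvD_eq_one_add_nil_part: "d \<in> transvD n \<Longrightarrow> d = 1\<^sub>m (n+1) + nil_part (n+1) d"
  by (erule transvD_elim) simp

lemma nil_part_dim [simp]: "dim_row (nil_part N d) = N" "dim_col (nil_part N d) = N"
  by (simp_all add: nil_part_def)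

lemma nil_part_carrier: "d \<in> carrier_mat N N \<Longrightarrow> nil_part N d \<in> carrier_mat N N"
  by (simp add: nil_part_def)

lemma transvD_nil_part_carrier: "d \<in> transvD n \<Longrightarrow> nil_part (n+1) d \<in> carrier_mat (n+1) (n+1)"
  by (intro nil_part_carrier transvD_carrier)

lemma nil_part_square: "d \<in> transvD n \<Longrightarrow> nil_part (n+1) d * nil_part (n+1) d = 0\<^sub>m (n+1) (n+1)"
  by (erule transvD_elim) (auto simp: outer_prod_mult intro!: eq_matI)

text \<open>A transvection squares to \<open>1\<close>, so unitarity makes it hermitian.\<close>
lemma nil_part_in_su: assumes d: "d \<in> transvD n" shows "nil_part (n+1) d \<in> su (n+1)"
proof -
  obtain v w where vw: "v \<in> carrier_vec (n+1)" "w \<in> carrier_vec (n+1)" "w \<bullet> v = 0"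
    "nil_part (n+1) d = outer_prod v w" and dc: "d \<in> carrier_mat (n+1) (n+1)"
    and unitary: "d * adj_mat d = 1\<^sub>m (n+1)"
    using transvD_elim[OF d] by metis
  have Mc: "nil_part (n+1) d \<in> carrier_mat (n+1) (n+1)" by (rule transvD_nil_part_carrier[OF d])
  have "d * d = 1\<^sub>m (n+1) + nil_part (n+1) d + nil_part (n+1) d + nil_part (n+1) d * nil_part (n+1) d"
    using one_plus_mult_one_plus[OF Mc Mc] transvD_eq_one_add_nil_part[OF d] by metis
  also have "\<dots> = 1\<^sub>m (n+1)"
    using Mc nil_part_square[OF d] by (intro eq_matI) (auto simp: add.assoc)
  finally have "d * d = 1\<^sub>m (n+1)" .
  then have "adj_mat d = (d * d) * adj_mat d" using left_mult_one_mat[OF adj_mat_carrier[OF dc]] by simp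
  also have "\<dots> = d * (d * adj_mat d)" by (rule assoc_mult_mat[OF dc dc adj_mat_carrier[OF dc]])
  finally have adj: "adj_mat d = d" using unitary dc by simp
  show ?thesis
  proof (rule suI)
    show "nil_part (n+1) d $$ (j,i) = gf4_conj (nil_part (n+1) d $$ (i,j))"
      if "i < n+1" "j < n+1" for i j
      using adj_mat_entry[OF dc that(2,1)] adj that dc by (simp add: nil_part_def)
  qed (use d vw in \<open>simp_all add: mat_trace_outer_prod\<close>)
qed

lemma su_mult_eq_0_iff:
  assumes "M \<in> su N" "K \<in> su N"
  shows "M * K = 0\<^sub>m N N \<longleftrightarrow> K * M = 0\<^sub>m N N"
proof -
  have "K * M = 0\<^sub>m N N" if "M * K = 0\<^sub>m N N" "M \<in> su N" "K \<in> su N" for M K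
    by (rule eq_matI) (use that su_mult_swap[OF that(2,3)] suD(1)[OF that(2)] suD(1)[OF that(3)] in auto)
  then show ?thesis using assms by blast
qed

lemma mat_add_left_cancel:
  assumes "A \<in> carrier_mat N N" "X \<in> carrier_mat N N" "Y \<in> carrier_mat N N"
  shows "A + X = A + Y \<longleftrightarrow> X = (Y :: gf4 mat)"
proof
  assume "A + X = A + Y"
  then have "A + (A + X) = A + (A + Y)" by simp
  then show "X = Y" using assms by (simp flip: assoc_add_mat add: add_mat_self)
qed simp

lemma transvD_mult:
  "d \<in> transvD n \<Longrightarrow> e \<in> transvD n \<Longrightarrow>
   d * e = 1\<^sub>m (n+1) + nil_part (n+1) d + nil_part (n+1) e + nil_part (n+1) d * nil_part (n+1) e"
  using one_plus_mult_one_plus[OF transvD_nil_part_carrier transvD_nil_part_carrier]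
    transvD_eq_one_add_nil_part by metis

context
  fixes n d e M K
  assumes d: "d \<in> transvD n" and e: "e \<in> transvD n"
  defines "M \<equiv> nil_part (n+1) d" and "K \<equiv> nil_part (n+1) e"
begin

lemma transvD_pair_carrier: "M \<in> carrier_mat (n+1) (n+1)" "K \<in> carrier_mat (n+1) (n+1)"
  unfolding M_def K_def using d e by (blast intro: transvD_nil_part_carrier)+

lemma transvD_pair_sandwich:
  "M * K * M = mat_trace (n+1) (M * K) \<cdot>\<^sub>m M"
  "K * M * K = mat_trace (n+1) (M * K) \<cdot>\<^sub>m K"
proof -
  have sandwich: "nil_part (n+1) a * nil_part (n+1) b * nil_part (n+1) a
      = mat_trace (n+1) (nil_part (n+1) a * nil_part (n+1) b) \<cdot>\<^sub>m nil_part (n+1) a"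
    if "a \<in> transvD n" "b \<in> transvD n" for a b
    using transvD_elim[OF that(1)] transvD_elim[OF that(2)] outer_prod_sandwich by metis
  show "M * K * M = mat_trace (n+1) (M * K) \<cdot>\<^sub>m M"
    unfolding M_def K_def by (rule sandwich[OF d e])
  show "K * M * K = mat_trace (n+1) (M * K) \<cdot>\<^sub>m K"
    using sandwich[OF e d] mat_trace_mult_comm[OF transvD_pair_carrier] by (simp add: M_def K_def)
qed

text \<open>\<open>tr(MK)\<close> equals its own conjugate \<open>tr(KM)\<close>, hence lies in \<open>F\<^sub>2\<close>.\<close>
lemma transvD_pair_trace_cases: "mat_trace (n+1) (M * K) = 0 \<or> mat_trace (n+1) (M * K) = 1"
proof (rule gf4_conj_fixed)
  have "gf4_conj (mat_trace (n+1) (M * K)) = mat_trace (n+1) (K * M)"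
    unfolding mat_trace_def gf4_conj_sum M_def K_def
    using su_mult_swap[OF nil_part_in_su[OF d] nil_part_in_su[OF e]] by simp
  then show "gf4_conj (mat_trace (n+1) (M * K)) = mat_trace (n+1) (M * K)"
    using mat_trace_mult_comm[OF transvD_pair_carrier] by (simp add: M_def K_def)
qed

lemma transvD_commute_iff: "d * e = e * d \<longleftrightarrow> M * K = K * M"
proof -
  note Mc = transvD_pair_carrier(1) and Kc = transvD_pair_carrier(2)
  have "1\<^sub>m (n+1) + K + M = 1\<^sub>m (n+1) + M + K"
    by (rule eq_matI) (use Mc Kc in \<open>auto simp: ac_simps\<close>)
  then have "e * d = 1\<^sub>m (n+1) + M + K + K * M"
    using transvD_mult[OF e d] by (simp add: M_def K_def)
  moreover have "d * e = 1\<^sub>m (n+1) + M + K + M * K"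
    using transvD_mult[OF d e] by (simp add: M_def K_def)
  ultimately show ?thesis
    by (simp only:) (rule mat_add_left_cancel, use Mc Kc in auto)
qed

lemma transvD_commute_iff_trace: "d * e = e * d \<longleftrightarrow> mat_trace (n+1) (M * K) = 0"
proof -
  note Mc = transvD_pair_carrier(1) and Kc = transvD_pair_carrier(2)
  have "M * K = K * M \<longleftrightarrow> mat_trace (n+1) (M * K) = 0"
  proof
    assume comm: "M * K = K * M"
    show "mat_trace (n+1) (M * K) = 0"
    proof (rule ccontr)
      assume "mat_trace (n+1) (M * K) \<noteq> 0"
      then have "M = K * M * M"
        using transvD_pair_trace_cases transvD_pair_sandwich(1) comm Mc by simp
      also have "\<dots> = 0\<^sub>m (n+1) (n+1)"
        using Mc Kc nil_part_square[OF d] by (simp add: M_def)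
      finally show False
        using transvD_elim[OF d] outer_prod_nonzero unfolding M_def by metis
    qed
  next
    assume tr: "mat_trace (n+1) (M * K) = 0"
    obtain v w where vw: "v \<in> carrier_vec (n+1)" "w \<in> carrier_vec (n+1)" "M = outer_prod v w"
      using transvD_elim[OF d] unfolding M_def by blast
    obtain a b where ab: "a \<in> carrier_vec (n+1)" "b \<in> carrier_vec (n+1)" "K = outer_prod a b"
      using transvD_elim[OF e] unfolding K_def by blast
    have "M * K = 0\<^sub>m (n+1) (n+1) \<or> K * M = 0\<^sub>m (n+1) (n+1)"
      using outer_prod_mult_zero_if_trace_zero[OF vw(1,2) ab(1,2)] tr unfolding vw(3) ab(3) by blast
    then show "M * K = K * M"
      using su_mult_eq_0_iff[OF nil_part_in_su[OF d] nil_part_in_su[OF e]] by (auto simp: M_def K_def)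
  qed
  then show ?thesis using transvD_commute_iff by simp
qed

lemma transvD_pair_trace: "mat_trace (n+1) (M * K) = of_bool (d * e \<noteq> e * d)"
proof (cases "d * e = e * d")
  case True
  then have "mat_trace (n+1) (M * K) = 0" using transvD_commute_iff_trace by blast
  then show ?thesis using True by simp
next
  case False
  then have "mat_trace (n+1) (M * K) = 1" using transvD_commute_iff_trace transvD_pair_trace_cases by blast
  then show ?thesis using False by simp
qed

text \<open>The line through \<open>d, e\<close> is \<open>{d, e, d\<^sup>e}\<close> with \<open>d\<^sup>e = e d e = 1 + (K + M + KM)(1 + K)\<close>;
  expanding with \<open>K\<^sup>2 = 0\<close> and \<open>KMK = K\<close> gives the claim.\<close>
lemma nil_part_line:
  assumes ne: "d * e \<noteq> e * d"
  shows "M + K + nil_part (n+1) (e * d * e) = M * K + K * M"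
proof -
  let ?N = "n+1"
  note Mc = transvD_pair_carrier(1) and Kc = transvD_pair_carrier(2)
  have KMK: "K * M * K = K" using transvD_pair_sandwich(2) transvD_pair_trace ne by simp
  have KK: "K * K = 0\<^sub>m ?N ?N" using nil_part_square[OF e] by (simp add: K_def)
  define R where "R = K + M + K * M"
  have Rc: "R \<in> carrier_mat ?N ?N" using Mc Kc by (simp add: R_def)
  have ed: "e * d = 1\<^sub>m ?N + R"
    unfolding R_def transvD_mult[OF e d, folded M_def K_def]
    by (rule eq_matI) (use Mc Kc in \<open>auto simp: ac_simps\<close>)
  have RK: "R * K = M * K + K"
  proof -
    have "R * K = (K + M) * K + K * M * K"
      unfolding R_def by (rule add_mult_distrib_mat) (use Mc Kc in auto)
    also have "(K + M) * K = K * K + M * K"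
      by (rule add_mult_distrib_mat) (use Mc Kc in auto)
    finally show ?thesis using KK KMK Mc Kc by simp
  qed
  have "e = 1\<^sub>m ?N + K" unfolding K_def by (rule transvD_eq_one_add_nil_part[OF e])
  then have "e * d * e = (1\<^sub>m ?N + R) * (1\<^sub>m ?N + K)" by (rule arg_cong2[where f = times, OF ed])
  also have "\<dots> = 1\<^sub>m ?N + R + K + (M * K + K)"
    unfolding one_plus_mult_one_plus[OF Rc Kc] RK ..
  finally have ede: "e * d * e = 1\<^sub>m ?N + R + K + (M * K + K)" .
  define P where "P = M * K"
  define Q where "Q = K * M"
  have PQ: "P \<in> carrier_mat ?N ?N" "Q \<in> carrier_mat ?N ?N" using Mc Kc by (simp_all add: P_def Q_def)
  have "M + K + (1\<^sub>m ?N + (K + M + Q) + K + (P + K) + 1\<^sub>m ?N) = P + Q"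
    by (rule eq_matI) (use Mc Kc PQ in \<open>auto simp: ac_simps\<close>)
  then show ?thesis unfolding nil_part_def ede R_def P_def Q_def .
qed

end

lemma su_gen_transvection:
  assumes ij: "i < n+1" "j < n+1" "i \<noteq> j" and w: "w \<noteq> 0"
  shows "1\<^sub>m (n+1) + su_gen (n+1) i j w \<in> transvD n"
proof -
  let ?N = "n+1" and ?G = "su_gen (n+1) i j w"
  define v where "v = vec ?N (\<lambda>k. if k = i then 1 else if k = j then gf4_conj w else 0)"
  define u where "u = vec ?N (\<lambda>k. if k = i then 1 else if k = j then w else 0)"
  have vc: "v \<in> carrier_vec ?N" and uc: "u \<in> carrier_vec ?N" by (simp_all add: v_def u_def)
  have cw: "gf4_conj w * w = 1" using gf4_mult_conj_self[OF w] by (simp add: mult.commute)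
  have G: "?G = outer_prod v u"
    by (rule eq_matI) (use ij w cw in \<open>auto simp: su_gen_entry outer_prod_entry v_def u_def\<close>)
  have uv: "u \<bullet> v = 0"
  proof -
    have "u \<bullet> v = (\<Sum>k\<in>{i,j}. u $ k * v $ k)"
      unfolding scalar_prod_def using ij
      by (intro sum.mono_neutral_cong_right) (auto simp: u_def v_def)
    then show ?thesis using ij gf4_mult_conj_self[OF w] by (simp add: u_def v_def)
  qed
  have nonzero: "v \<noteq> 0\<^sub>v ?N" "u \<noteq> 0\<^sub>v ?N"
    using ij by (auto simp: v_def u_def dest!: arg_cong[where f = "\<lambda>x. x $ i"])
  let ?A = "1\<^sub>m ?N + ?G"
  have Ac: "?A \<in> carrier_mat ?N ?N" by simp
  have GG: "?G * ?G = 0\<^sub>m ?N ?N"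
    unfolding G outer_prod_mult[OF vc uc vc uc] uv by (rule eq_matI) (use vc uc in auto)
  have AA: "?A * ?A = 1\<^sub>m ?N"
    unfolding one_plus_mult_one_plus[OF su_gen_carrier su_gen_carrier] GG by (rule eq_matI) auto
  have adj: "adj_mat ?A = ?A"
    by (rule eq_matI)
      (use Ac su_conj[OF su_gen_in_su[OF ij(3) w ij(1,2)]] in \<open>auto simp: adj_mat_def\<close>)
  have "det ?A * det ?A = 1" using det_mult[OF Ac Ac] AA by simp
  then have "det ?A = 1" by (rule gf4_square_eq_1)
  then have "?A \<in> SU n" using AA adj Ac by (simp add: SU_def)
  moreover have "is_transvection ?N ?A"
    unfolding is_transvection_def
    by (rule exI[of _ v], rule exI[of _ u]) (use vc uc nonzero uv G in simp)
  ultimately show ?thesis by (simp add: transvD_def)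
qed

lemma nil_part_one_add: "A \<in> carrier_mat N N \<Longrightarrow> nil_part N (1\<^sub>m N + A) = A"
  unfolding nil_part_def by (rule eq_matI) (auto simp: ac_simps)

section \<open>The centre of \<open>su\<^sub>N(2)\<close>\<close>

lemma mult_herm_offdiag_entry:
  assumes X: "X \<in> carrier_mat N N" and ij: "i < N" "j < N" "i \<noteq> j" and kl: "k < N" "l < N"
  shows "(X * herm_offdiag N i j c) $$ (k,l)
      = (if l = j then X $$ (k,i) * c else 0) + (if l = i then X $$ (k,j) * gf4_conj c else 0)"
proof -
  have "(X * herm_offdiag N i j c) $$ (k,l) = (\<Sum>m<N. X $$ (k,m) * herm_offdiag N i j c $$ (m,l))"
    by (rule mult_mat_entry) (use X kl in \<open>auto simp: herm_offdiag_def\<close>)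
  also have "\<dots> = (\<Sum>m<N. (if m = i then (if l = j then X $$ (k,i) * c else 0) else 0)
        + (if m = j then (if l = i then X $$ (k,j) * gf4_conj c else 0) else 0))"
    using ij kl by (intro sum.cong) (auto simp: herm_offdiag_def)
  finally show ?thesis using ij by (simp add: sum.distrib)
qed

lemma herm_offdiag_mult_entry:
  assumes X: "X \<in> carrier_mat N N" and ij: "i < N" "j < N" "i \<noteq> j" and kl: "k < N" "l < N"
  shows "(herm_offdiag N i j c * X) $$ (k,l)
      = (if k = i then c * X $$ (j,l) else 0) + (if k = j then gf4_conj c * X $$ (i,l) else 0)"
proof -
  have "(herm_offdiag N i j c * X) $$ (k,l) = (\<Sum>m<N. herm_offdiag N i j c $$ (k,m) * X $$ (m,l))"
    by (rule mult_mat_entry) (use X kl in \<open>auto simp: herm_offdiag_def\<close>)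
  also have "\<dots> = (\<Sum>m<N. (if m = j then (if k = i then c * X $$ (j,l) else 0) else 0)
        + (if m = i then (if k = j then gf4_conj c * X $$ (i,l) else 0) else 0))"
    using ij kl by (intro sum.cong) (auto simp: herm_offdiag_def)
  finally show ?thesis using ij by (simp add: sum.distrib)
qed

lemma mult_diag_pair_entry:
  assumes X: "X \<in> carrier_mat N N" and kl: "k < N" "l < N"
  shows "(X * diag_pair N i j) $$ (k,l) = (if l = i \<or> l = j then X $$ (k,l) else 0)"
proof -
  have "(X * diag_pair N i j) $$ (k,l) = (\<Sum>m<N. X $$ (k,m) * diag_pair N i j $$ (m,l))"
    by (rule mult_mat_entry) (use X kl in \<open>auto simp: diag_pair_def\<close>)
  also have "\<dots> = (\<Sum>m<N. if m = l then (if l = i \<or> l = j then X $$ (k,l) else 0) else 0)"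
    using kl by (intro sum.cong) (auto simp: diag_pair_def)
  finally show ?thesis using kl by simp
qed

definition is_scalar_mat :: "nat \<Rightarrow> gf4 mat \<Rightarrow> bool" where
  "is_scalar_mat N X \<longleftrightarrow> (\<forall>k<N. \<forall>l<N. X $$ (k,l) = (if k = l then X $$ (0,0) else 0))"

lemma su_commuting_is_scalar:
  assumes N: "3 \<le> N" and X: "X \<in> su N" and comm: "\<And>Y. Y \<in> su N \<Longrightarrow> X * Y = Y * X"
  shows "is_scalar_mat N X"
  unfolding is_scalar_mat_def
proof (intro allI impI)
  fix k l assume kl: "k < N" "l < N"
  have Xc: "X \<in> carrier_mat N N" using suD(1)[OF X] .
  show "X $$ (k,l) = (if k = l then X $$ (0,0) else 0)"
  proof (cases "k = l")
    case True
    show ?thesis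
    proof (cases "k = 0")
      case False
      have "(X * herm_offdiag N 0 k 1) $$ (0,k) = (herm_offdiag N 0 k 1 * X) $$ (0,k)"
        using comm[OF herm_offdiag_in_su] kl False by simp
      then show ?thesis
        using mult_herm_offdiag_entry[OF Xc _ kl(1) _ _ kl(1), of 0 0 1]
          herm_offdiag_mult_entry[OF Xc _ kl(1) _ _ kl(1), of 0 0 1] False True kl by simp
    qed (use True in simp)
  next
    case False
    have "\<exists>j<3. j \<noteq> k \<and> j \<noteq> l" by presburger
    then obtain j where j: "j < N" "j \<noteq> k" "j \<noteq> l" using N by (meson order_less_le_trans)
    have "(X * herm_offdiag N l j 1) $$ (k,j) = (herm_offdiag N l j 1 * X) $$ (k,j)"
      using comm[OF herm_offdiag_in_su] kl j by simp
    then show ?thesis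
      using mult_herm_offdiag_entry[OF Xc kl(2) j(1) _ kl(1) j(1), of 1]
        herm_offdiag_mult_entry[OF Xc kl(2) j(1) _ kl(1) j(1), of 1] False j by simp
  qed
qed

lemma su_trace_orthogonal_is_scalar:
  assumes X: "X \<in> su N" and tr: "\<And>Y. Y \<in> su N \<Longrightarrow> mat_trace N (X * Y) = 0"
  shows "is_scalar_mat N X"
  unfolding is_scalar_mat_def
proof (intro allI impI)
  fix k l assume kl: "k < N" "l < N"
  have Xc: "X \<in> carrier_mat N N" using suD(1)[OF X] .
  show "X $$ (k,l) = (if k = l then X $$ (0,0) else 0)"
  proof (cases "k = l")
    case True
    show ?thesis
    proof (cases "k = 0")
      case False
      have "mat_trace N (X * diag_pair N 0 k) = (\<Sum>i\<in>{0,k}. X $$ (i,i))"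
        unfolding mat_trace_def using Xc kl
        by (intro sum.mono_neutral_cong_right) (auto simp: mult_diag_pair_entry)
      then have "X $$ (0,0) + X $$ (k,k) = 0"
        using tr[OF diag_pair_in_su] kl False by simp
      then show ?thesis using True by (simp add: gf4_add_eq_0_iff)
    qed (use True in simp)
  next
    case False
    have t: "X $$ (l,k) * c + X $$ (k,l) * gf4_conj c = 0" if "c \<noteq> 0" for c
    proof -
      have "mat_trace N (X * herm_offdiag N k l c)
          = (\<Sum>i<N. (if i = l then X $$ (i,k) * c else 0) + (if i = k then X $$ (i,l) * gf4_conj c else 0))"
        unfolding mat_trace_def using Xc kl False by (intro sum.cong) (auto simp: mult_herm_offdiag_entry)
      then show ?thesis using tr[OF herm_offdiag_in_su] kl False that by (simp add: sum.distrib)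
    qed
    have cj: "X $$ (k,l) = gf4_conj (X $$ (l,k))" using su_conj[OF X kl(2,1)] by simp
    have "X $$ (l,k) = 0"
      by (rule gf4_trace_nondegenerate) (use t[of 1] t[of Gw] cj in \<open>simp_all add: mult.commute\<close>)
    then show ?thesis using cj False by simp
  qed
qed

lemma scalar_mat_mult:
  assumes "is_scalar_mat N X" and X: "X \<in> carrier_mat N N" and Y: "Y \<in> carrier_mat N N"
  shows "X * Y = X $$ (0,0) \<cdot>\<^sub>m Y" "Y * X = X $$ (0,0) \<cdot>\<^sub>m Y"
proof -
  define c where "c = X $$ (0,0)"
  have X_entry: "X $$ (k,l) = (if k = l then c else 0)" if "k < N" "l < N" for k l
    using assms(1) that unfolding is_scalar_mat_def c_def by blast
  have "(X * Y) $$ (k,l) = c * Y $$ (k,l)" if kl: "k < N" "l < N" for k l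
  proof -
    have "(X * Y) $$ (k,l) = (\<Sum>m<N. if m = k then c * Y $$ (k,l) else 0)"
      unfolding mult_mat_entry[OF X Y kl] using kl by (intro sum.cong) (auto simp: X_entry)
    then show ?thesis using kl by simp
  qed
  moreover have "(Y * X) $$ (k,l) = c * Y $$ (k,l)" if kl: "k < N" "l < N" for k l
  proof -
    have "(Y * X) $$ (k,l) = (\<Sum>m<N. if m = l then c * Y $$ (k,l) else 0)"
      unfolding mult_mat_entry[OF Y X kl] using kl by (intro sum.cong) (auto simp: X_entry mult.commute)
    then show ?thesis using kl by simp
  qed
  ultimately show "X * Y = X $$ (0,0) \<cdot>\<^sub>m Y" "Y * X = X $$ (0,0) \<cdot>\<^sub>m Y"
    using X Y by (auto simp: c_def intro!: eq_matI)
qed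

text \<open>For \<open>N \<ge> 3\<close> both conditions say that \<open>X\<close> is scalar: the centre of \<open>su N\<close> is the radical
  of its trace form.\<close>
lemma su_central_iff_trace_orthogonal:
  assumes N: "3 \<le> N" and X: "X \<in> su N"
  shows "(\<forall>Y\<in>su N. lie_bracket X Y = 0\<^sub>m N N) \<longleftrightarrow> (\<forall>Y\<in>su N. mat_trace N (X * Y) = 0)"
proof -
  have Xc: "X \<in> carrier_mat N N" using suD(1)[OF X] .
  have "(\<forall>Y\<in>su N. lie_bracket X Y = 0\<^sub>m N N) \<longleftrightarrow> (\<forall>Y\<in>su N. X * Y = Y * X)"
    using lie_bracket_eq_0_iff[OF Xc] suD(1) by blast
  also have "\<dots> \<longleftrightarrow> is_scalar_mat N X"
    using su_commuting_is_scalar[OF N X] scalar_mat_mult[OF _ Xc] suD(1) by metis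
  also have "\<dots> \<longleftrightarrow> (\<forall>Y\<in>su N. mat_trace N (X * Y) = 0)"
    using su_trace_orthogonal_is_scalar[OF X] scalar_mat_mult(1)[OF _ Xc] suD(1,3)
    by (metis mat_trace_smult mult_zero_right)
  finally show ?thesis .
qed

section \<open>The map from \<open>\<A>(D)\<close> onto \<open>su\<^sub>n\<^sub>+\<^sub>1(2)\<close>\<close>

definition gf4_of_bit :: "bit \<Rightarrow> gf4" where
  "gf4_of_bit b = (if b = 1 then 1 else 0)"

lemma gf4_of_bit_add [simp]: "gf4_of_bit (a + b) = gf4_of_bit a + gf4_of_bit b"
  by (cases a; cases b) (simp_all add: gf4_of_bit_def)

lemma gf4_of_bit_mult [simp]: "gf4_of_bit (a * b) = gf4_of_bit a * gf4_of_bit b"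
  by (cases a; cases b) (simp_all add: gf4_of_bit_def)

lemma gf4_of_bit_0 [simp]: "gf4_of_bit 0 = 0"
  by (simp add: gf4_of_bit_def)

lemma gf4_of_bit_1 [simp]: "gf4_of_bit 1 = 1"
  by (simp add: gf4_of_bit_def)

lemma gf4_conj_of_bit [simp]: "gf4_conj (gf4_of_bit b) = gf4_of_bit b"
  by (simp add: gf4_of_bit_def)

lemma gf4_of_bit_of_bool [simp]: "gf4_of_bit (of_bool P) = of_bool P"
  by (simp add: gf4_of_bit_def)

lemma gf4_of_bit_eq_0_iff [simp]: "gf4_of_bit a = 0 \<longleftrightarrow> a = 0"
  by (cases a) (simp_all add: gf4_of_bit_def)

lemma gf4_of_bit_sum: "gf4_of_bit (sum f A) = (\<Sum>x\<in>A. gf4_of_bit (f x))"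
  by (induction A rule: infinite_finite_induct) auto

lemma sum_of_bool_eq_mult:
  assumes "finite S" "a \<in> S"
  shows "(\<Sum>g\<in>S. of_bool (g = a) * f g) = (f a :: gf4)"
proof -
  have "(\<Sum>g\<in>S. of_bool (g = a) * f g) = (\<Sum>g\<in>S. if g = a then f a else 0)" by (intro sum.cong) auto
  then show ?thesis using assms by simp
qed

lemma sum_mult_sum_mat_entry:
  fixes F :: "'g \<Rightarrow> gf4 mat"
  assumes F: "\<And>d. d \<in> D \<Longrightarrow> F d \<in> carrier_mat N N" and ij: "i < N" "j < N"
  shows "(\<Sum>k<N. (\<Sum>d\<in>D. a d * F d $$ (i,k)) * (\<Sum>e\<in>D. b e * F e $$ (k,j)))
        = (\<Sum>d\<in>D. \<Sum>e\<in>D. a d * b e * (F d * F e) $$ (i,j))"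
proof -
  have "(\<Sum>k<N. (\<Sum>d\<in>D. a d * F d $$ (i,k)) * (\<Sum>e\<in>D. b e * F e $$ (k,j)))
      = (\<Sum>k<N. \<Sum>d\<in>D. \<Sum>e\<in>D. (a d * b e) * (F d $$ (i,k) * F e $$ (k,j)))"
    by (simp add: sum_product mult_ac)
  also have "\<dots> = (\<Sum>d\<in>D. \<Sum>e\<in>D. \<Sum>k<N. (a d * b e) * (F d $$ (i,k) * F e $$ (k,j)))"
    by (subst sum.swap) (simp only: sum.swap[of _ "{..<N}"])
  also have "\<dots> = (\<Sum>d\<in>D. \<Sum>e\<in>D. a d * b e * (F d * F e) $$ (i,j))"
    by (intro sum.cong refl) (simp only: mult_mat_entry[OF F F ij] sum_distrib_left)
  finally show ?thesis .
qed

lemma finite_transvD: "finite (transvD n)"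
  by (rule finite_subset[OF _ finite_carrier_mat]) (auto simp: transvD_def SU_def)

text \<open>The sum runs over all (finitely many) matrices,
  so that it is also meaningful for products in \<open>\<A>(D)\<close>, whose support lies among the \<open>e d e\<close>.\<close>
definition A_to_su :: "nat \<Rightarrow> (gf4 mat \<Rightarrow> bit) \<Rightarrow> gf4 mat" where
  "A_to_su n x = mat (n+1) (n+1)
     (\<lambda>(i,j). \<Sum>g\<in>carrier_mat (n+1) (n+1). gf4_of_bit (x g) * nil_part (n+1) g $$ (i,j))"

lemma A_to_su_carrier [simp]: "A_to_su n x \<in> carrier_mat (n+1) (n+1)"
  by (simp add: A_to_su_def)

lemma A_to_su_dim [simp]: "dim_row (A_to_su n x) = n+1" "dim_col (A_to_su n x) = n+1"
  by (simp_all add: A_to_su_def)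

lemma A_to_su_entry:
  assumes x: "x \<in> Aspace (transvD n)" and ij: "i < n+1" "j < n+1"
  shows "A_to_su n x $$ (i,j) = (\<Sum>d\<in>transvD n. gf4_of_bit (x d) * nil_part (n+1) d $$ (i,j))"
  unfolding A_to_su_def using ij x transvD_carrier finite_carrier_mat
  by (simp, intro sum.mono_neutral_right) (auto simp: Aspace_def)

lemma Aadd_in_Aspace: "x \<in> Aspace D \<Longrightarrow> y \<in> Aspace D \<Longrightarrow> Aadd x y \<in> Aspace D"
  by (simp add: Aspace_def Aadd_def)

lemma A_to_su_add: "A_to_su n (Aadd x y) = A_to_su n x + A_to_su n y"
  unfolding A_to_su_def Aadd_def gf4_of_bit_add distrib_right sum.distrib by (rule eq_matI) auto

lemma A_to_su_in_su: assumes x: "x \<in> Aspace (transvD n)" shows "A_to_su n x \<in> su (n+1)"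
proof (rule suI)
  show "A_to_su n x $$ (j,i) = gf4_conj (A_to_su n x $$ (i,j))" if ij: "i < n+1" "j < n+1" for i j
  proof -
    have "gf4_conj (A_to_su n x $$ (i,j))
        = (\<Sum>d\<in>transvD n. gf4_of_bit (x d) * gf4_conj (nil_part (n+1) d $$ (i,j)))"
      by (simp add: A_to_su_entry[OF x ij] gf4_conj_sum)
    also have "\<dots> = (\<Sum>d\<in>transvD n. gf4_of_bit (x d) * nil_part (n+1) d $$ (j,i))"
      using ij su_conj[OF nil_part_in_su] by (intro sum.cong) auto
    finally show ?thesis by (simp add: A_to_su_entry[OF x ij(2,1)])
  qed
  have "mat_trace (n+1) (A_to_su n x) = (\<Sum>i<n+1. \<Sum>d\<in>transvD n. gf4_of_bit (x d) * nil_part (n+1) d $$ (i,i))"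
    unfolding mat_trace_def by (intro sum.cong refl) (rule A_to_su_entry[OF x]; simp)
  also have "\<dots> = (\<Sum>d\<in>transvD n. gf4_of_bit (x d) * mat_trace (n+1) (nil_part (n+1) d))"
    unfolding mat_trace_def sum_distrib_left by (rule sum.swap)
  finally show "mat_trace (n+1) (A_to_su n x) = 0" using suD(3)[OF nil_part_in_su] by simp
qed (rule A_to_su_carrier)

lemma A_to_su_basis:
  assumes d: "d \<in> transvD n"
  shows "(\<lambda>g. of_bool (g = d)) \<in> Aspace (transvD n)" "A_to_su n (\<lambda>g. of_bool (g = d)) = nil_part (n+1) d"
proof -
  show x: "(\<lambda>g. of_bool (g = d)) \<in> Aspace (transvD n)" using d by (auto simp: Aspace_def)
  show "A_to_su n (\<lambda>g. of_bool (g = d)) = nil_part (n+1) d"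
    by (rule eq_matI)
      (use d transvD_nil_part_carrier[OF d] in \<open>auto simp: A_to_su_entry[OF x] sum_of_bool_eq_mult finite_transvD\<close>)
qed

lemma A_to_su_mult_entry:
  assumes x: "x \<in> Aspace (transvD n)" and y: "y \<in> Aspace (transvD n)" and ij: "i < n+1" "j < n+1"
  shows "(A_to_su n x * A_to_su n y) $$ (i,j) = (\<Sum>d\<in>transvD n. \<Sum>e\<in>transvD n.
      gf4_of_bit (x d) * gf4_of_bit (y e) * (nil_part (n+1) d * nil_part (n+1) e) $$ (i,j))"
proof -
  have "(A_to_su n x * A_to_su n y) $$ (i,j) = (\<Sum>k<n+1. A_to_su n x $$ (i,k) * A_to_su n y $$ (k,j))"
    by (rule mult_mat_entry[OF A_to_su_carrier A_to_su_carrier ij])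
  also have "\<dots> = (\<Sum>k<n+1. (\<Sum>d\<in>transvD n. gf4_of_bit (x d) * nil_part (n+1) d $$ (i,k))
      * (\<Sum>e\<in>transvD n. gf4_of_bit (y e) * nil_part (n+1) e $$ (k,j)))"
    using ij by (intro sum.cong refl) (simp add: A_to_su_entry[OF x] A_to_su_entry[OF y])
  also have "\<dots> = (\<Sum>d\<in>transvD n. \<Sum>e\<in>transvD n.
      gf4_of_bit (x d) * gf4_of_bit (y e) * (nil_part (n+1) d * nil_part (n+1) e) $$ (i,j))"
    by (rule sum_mult_sum_mat_entry[OF transvD_nil_part_carrier ij])
  finally show ?thesis .
qed

text \<open>On basis elements the product of \<open>\<A>(D)\<close> becomes the commutator \<open>MK + KM\<close>: for a line this is
  the identity \<open>nil_part_line\<close>, for commuting \<open>d, e\<close> both sides vanish.\<close>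
lemma A_to_su_Abasis_prod_entry:
  assumes d: "d \<in> transvD n" and e: "e \<in> transvD n" and ij: "i < n+1" "j < n+1"
  shows "(\<Sum>g\<in>carrier_mat (n+1) (n+1). gf4_of_bit (Abasis_prod d e g) * nil_part (n+1) g $$ (i,j))
     = (nil_part (n+1) d * nil_part (n+1) e) $$ (i,j) + (nil_part (n+1) e * nil_part (n+1) d) $$ (i,j)"
proof (cases "d * e = e * d")
  case True
  then have "nil_part (n+1) d * nil_part (n+1) e = nil_part (n+1) e * nil_part (n+1) d"
    using transvD_commute_iff[OF d e] True by blast
  then show ?thesis using True by (simp add: Abasis_prod_def)
next
  case False
  let ?C = "carrier_mat (n+1) (n+1)" and ?M = "nil_part (n+1)"
  have dc: "d \<in> ?C" and ec: "e \<in> ?C" and edec: "e * d * e \<in> ?C"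
    using transvD_carrier[OF d] transvD_carrier[OF e] by auto
  have "(\<Sum>g\<in>?C. gf4_of_bit (Abasis_prod d e g) * ?M g $$ (i,j))
      = (\<Sum>g\<in>?C. of_bool (g = d) * ?M g $$ (i,j)) + (\<Sum>g\<in>?C. of_bool (g = e) * ?M g $$ (i,j))
        + (\<Sum>g\<in>?C. of_bool (g = e * d * e) * ?M g $$ (i,j))"
    unfolding Abasis_prod_def if_P[OF False] gf4_of_bit_add gf4_of_bit_of_bool distrib_right sum.distrib ..
  also have "\<dots> = ?M d $$ (i,j) + ?M e $$ (i,j) + ?M (e * d * e) $$ (i,j)"
    by (simp only: sum_of_bool_eq_mult[OF finite_carrier_mat dc] sum_of_bool_eq_mult[OF finite_carrier_mat ec]
        sum_of_bool_eq_mult[OF finite_carrier_mat edec])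
  also have "\<dots> = (?M d + ?M e + ?M (e * d * e)) $$ (i,j)"
    using ij dc ec edec by (simp add: nil_part_carrier)
  also have "\<dots> = (?M d * ?M e + ?M e * ?M d) $$ (i,j)"
    using nil_part_line[OF d e False] by simp
  finally show ?thesis
    using ij transvD_nil_part_carrier[OF d] transvD_nil_part_carrier[OF e] by simp
qed

lemma A_to_su_mult:
  assumes x: "x \<in> Aspace (transvD n)" and y: "y \<in> Aspace (transvD n)"
  shows "A_to_su n (Amult (transvD n) x y) = lie_bracket (A_to_su n x) (A_to_su n y)"
proof (rule eq_matI)
  let ?D = "transvD n" and ?C = "carrier_mat (n+1) (n+1)" and ?M = "nil_part (n+1)"
  let ?b = "gf4_of_bit"
  fix i j assume "i < dim_row (lie_bracket (A_to_su n x) (A_to_su n y))"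
    "j < dim_col (lie_bracket (A_to_su n x) (A_to_su n y))"
  then have ij: "i < n+1" "j < n+1" by (auto simp: lie_bracket_def A_to_su_def)
  have "A_to_su n (Amult ?D x y) $$ (i,j) = (\<Sum>g\<in>?C. ?b (Amult ?D x y g) * ?M g $$ (i,j))"
    using ij by (simp add: A_to_su_def)
  also have "\<dots> = (\<Sum>g\<in>?C. \<Sum>d\<in>?D. \<Sum>e\<in>?D. ?b (x d) * ?b (y e) * (?b (Abasis_prod d e g) * ?M g $$ (i,j)))"
    unfolding Amult_def gf4_of_bit_sum gf4_of_bit_mult sum_distrib_right mult.assoc ..
  also have "\<dots> = (\<Sum>d\<in>?D. \<Sum>e\<in>?D. \<Sum>g\<in>?C. ?b (x d) * ?b (y e) * (?b (Abasis_prod d e g) * ?M g $$ (i,j)))"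
    by (subst sum.swap) (simp only: sum.swap[of _ ?C])
  also have "\<dots> = (\<Sum>d\<in>?D. \<Sum>e\<in>?D. ?b (x d) * ?b (y e) * ((?M d * ?M e) $$ (i,j) + (?M e * ?M d) $$ (i,j)))"
    by (intro sum.cong refl) (simp only: sum_distrib_left[symmetric] A_to_su_Abasis_prod_entry ij)
  also have "\<dots> = (\<Sum>d\<in>?D. \<Sum>e\<in>?D. ?b (x d) * ?b (y e) * (?M d * ?M e) $$ (i,j))
      + (\<Sum>e\<in>?D. \<Sum>d\<in>?D. ?b (y e) * ?b (x d) * (?M e * ?M d) $$ (i,j))"
    by (simp only: distrib_left sum.distrib) (subst (2) sum.swap, simp only: mult.commute)
  also have "\<dots> = (A_to_su n x * A_to_su n y) $$ (i,j) + (A_to_su n y * A_to_su n x) $$ (i,j)"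
    by (simp only: A_to_su_mult_entry[OF x y ij] A_to_su_mult_entry[OF y x ij])
  also have "\<dots> = lie_bracket (A_to_su n x) (A_to_su n y) $$ (i,j)"
    using ij by (simp add: lie_bracket_def gf4_minus)
  finally show "A_to_su n (Amult ?D x y) $$ (i,j) = lie_bracket (A_to_su n x) (A_to_su n y) $$ (i,j)" .
qed (auto simp: lie_bracket_def A_to_su_def)

lemma A_to_su_trace:
  assumes x: "x \<in> Aspace (transvD n)" and y: "y \<in> Aspace (transvD n)"
  shows "mat_trace (n+1) (A_to_su n x * A_to_su n y) = gf4_of_bit (Aform (transvD n) x y)"
proof -
  let ?D = "transvD n" and ?M = "nil_part (n+1)" and ?b = "gf4_of_bit"
  have "mat_trace (n+1) (A_to_su n x * A_to_su n y)
     = (\<Sum>i<n+1. \<Sum>d\<in>?D. \<Sum>e\<in>?D. ?b (x d) * ?b (y e) * (?M d * ?M e) $$ (i,i))"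
    unfolding mat_trace_def by (intro sum.cong refl) (rule A_to_su_mult_entry[OF x y]; simp)
  also have "\<dots> = (\<Sum>d\<in>?D. \<Sum>e\<in>?D. ?b (x d) * ?b (y e) * mat_trace (n+1) (?M d * ?M e))"
    unfolding mat_trace_def sum_distrib_left by (subst sum.swap) (simp only: sum.swap[of _ "{..<n+1}"])
  also have "\<dots> = ?b (Aform ?D x y)"
    unfolding Aform_def gf4_of_bit_sum gf4_of_bit_mult gf4_of_bit_of_bool
    by (intro sum.cong refl) (simp only: transvD_pair_trace)
  finally show ?thesis .
qed

lemma A_to_su_surj:
  assumes "1 \<le> n" and X: "X \<in> su (n+1)"
  shows "\<exists>x\<in>Aspace (transvD n). X = A_to_su n x"
proof -
  have "2 \<le> n+1" using assms(1) by simp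
  with X show ?thesis
  proof (induction rule: su_induct)
    case (add X Y)
    then obtain x y where "x \<in> Aspace (transvD n)" "X = A_to_su n x" "y \<in> Aspace (transvD n)" "Y = A_to_su n y"
      by blast
    then show ?case by (intro bexI[of _ "Aadd x y"]) (simp_all add: A_to_su_add Aadd_in_Aspace)
  next
    case (gen i j w)
    then have d: "1\<^sub>m (n+1) + su_gen (n+1) i j w \<in> transvD n" by (rule su_gen_transvection)
    show ?case
      by (rule bexI[OF _ A_to_su_basis(1)[OF d]])
        (unfold A_to_su_basis(2)[OF d] nil_part_one_add[OF su_gen_carrier], rule refl)
  qed
qed

lemma zero_in_lie_center_su: "0\<^sub>m N N \<in> lie_center N (su N)"
  unfolding lie_center_def using su_zero lie_bracket_eq_0_iff suD(1) by fastforce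

lemma A_to_su_in_center_iff:
  assumes n: "2 \<le> n" and x: "x \<in> Aspace (transvD n)"
  shows "A_to_su n x \<in> lie_center (n+1) (su (n+1)) \<longleftrightarrow> x \<in> Arad (transvD n)"
proof -
  have "A_to_su n x \<in> lie_center (n+1) (su (n+1))
      \<longleftrightarrow> (\<forall>Y\<in>su (n+1). mat_trace (n+1) (A_to_su n x * Y) = 0)"
    unfolding lie_center_def
    using su_central_iff_trace_orthogonal[OF _ A_to_su_in_su[OF x]] A_to_su_in_su[OF x] n by simp
  also have "\<dots> \<longleftrightarrow> (\<forall>y\<in>Aspace (transvD n). mat_trace (n+1) (A_to_su n x * A_to_su n y) = 0)"
    using A_to_su_surj A_to_su_in_su n by (metis le_trans one_le_numeral)
  also have "\<dots> \<longleftrightarrow> x \<in> Arad (transvD n)"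
    using x A_to_su_trace[OF x] by (simp add: Arad_def)
  finally show ?thesis .
qed

theorem lemma5p2:
  fixes n :: nat
  assumes "2 \<le> n"
  shows "alg_quot_iso
           (Aspace (transvD n)) Aadd (Amult (transvD n)) (Arad (transvD n))
           (g2 n) (+) lie_bracket (lie_center (n+1) (g2 n))"
proof -
  have g2: "g2 n = su (n+1)" using g2_eq_su assms by simp
  note zero = zero_in_lie_center_su[of "n+1"]
  have add_zero: "X + 0\<^sub>m (n+1) (n+1) = X" if "X \<in> su (n+1)" for X
    using suD(1)[OF that] by simp
  show ?thesis
    unfolding alg_quot_iso_def g2
  proof (intro exI[of _ "A_to_su n"] conjI ballI)
    show "A_to_su n x \<in> su (n+1)" if "x \<in> Aspace (transvD n)" for x
      using A_to_su_in_su[OF that] .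
    show "A_to_su n (Aadd x y) = A_to_su n x + A_to_su n y" for x y
      by (rule A_to_su_add)
    show "A_to_su n x \<in> lie_center (n+1) (su (n+1)) \<longleftrightarrow> x \<in> Arad (transvD n)"
      if "x \<in> Aspace (transvD n)" for x
      using A_to_su_in_center_iff[OF assms that] .
  next
    fix x y assume x: "x \<in> Aspace (transvD n)" and y: "y \<in> Aspace (transvD n)"
    have "A_to_su n (Amult (transvD n) x y) = lie_bracket (A_to_su n x) (A_to_su n y) + 0\<^sub>m (n+1) (n+1)"
      using A_to_su_mult[OF x y] add_zero[OF su_bracket[OF A_to_su_in_su[OF x] A_to_su_in_su[OF y]]] by simp
    then show "\<exists>z\<in>lie_center (n+1) (su (n+1)).
        A_to_su n (Amult (transvD n) x y) = lie_bracket (A_to_su n x) (A_to_su n y) + z"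
      using zero by blast
  next
    fix b assume "b \<in> su (n+1)"
    then obtain x where "x \<in> Aspace (transvD n)" "b = A_to_su n x" using A_to_su_surj[of n b] assms by auto
    then show "\<exists>x\<in>Aspace (transvD n). \<exists>z\<in>lie_center (n+1) (su (n+1)). b = A_to_su n x + z"
      using zero add_zero A_to_su_in_su by metis
  qed
qed

end
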